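(* Let $\mathscr{X}$ be a complex Banach space and let $\mathfrak{M}\subseteq\mathfrak{C}(\mathscr{X})$ be either (i) a well-ordered nest, or (ii) a lattice of subspaces of the form $\mathfrak{M}=\mathfrak{C}_1\cup\cdots\cup\mathfrak{C}_n$ with $n\ge 2$, where $\mathfrak{C}_i=\{\{0\}\subsetneq\mathscr{M}^{(i)}_1\subsetneq\cdots\subsetneq\mathscr{M}^{(i)}_{q_i}\subsetneq\mathscr{X}\}$ ($q_i\ge1$), any non-trivial subspaces $\mathscr{M}^{(i)}_k$ and $\mathscr{M}^{(j)}_l$ with $i\neq j$ are incomparable under inclusion, and $q_i\neq q_j$ whenever $i\neq j$. Then $\mathrm{Col}(\mathfrak{M})=\mathrm{Grp}(\mathrm{Alg}(\mathfrak{M}))$.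
   Context: A nest is a family of closed subspaces containing $\{0\}$ and $\mathscr{X}$, totally ordered by inclusion and closed under arbitrary intersections and closed linear spans; it is well-ordered if every non-empty subset has a least element. A lattice of subspaces is a family of closed subspaces containing $\{0\},\mathscr{X}$ closed under $\cap$ and $\overline{\,\cdot+\cdot\,}$. $\mathrm{Alg}(\mathfrak{F})$ is the set of bounded operators leaving every subspace of $\mathfrak{F}$ invariant; $\mathrm{Grp}(\mathcal{A})$ is the group of invertible $S\in\mathcal{A}$ with $S^{-1}\in\mathcal{A}$. $\mathrm{Col}(\mathfrak{F})$ is the group of invertible $S\in\mathcal{B}(\mathscr{X})$ such that for every closed subspace $\mathscr{M}$: $\mathscr{M}\in\mathfrak{F}$ iff $S\mathscr{M}\in\mathfrak{F}$. *)

theory Defs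
  imports "HOL-Analysis.Analysis"
begin

class complex_banach = banach +
  fixes scaleC :: "complex \<Rightarrow> 'a \<Rightarrow> 'a"
  assumes scaleC_add_right: "scaleC a (x + y) = scaleC a x + scaleC a y"
    and scaleC_add_left: "scaleC (a + b) x = scaleC a x + scaleC b x"
    and scaleC_scaleC: "scaleC a (scaleC b x) = scaleC (a * b) x"
    and scaleC_one: "scaleC 1 x = x"
    and scaleC_of_real: "scaleC (of_real r) x = scaleR r x"
    and norm_scaleC: "norm (scaleC a x) = cmod a * norm x"

definition clinear_op :: "('a::complex_banach \<Rightarrow> 'a) \<Rightarrow> bool" where
  "clinear_op T \<longleftrightarrow> (\<forall>x y. T (x + y) = T x + T y) \<and> (\<forall>a x. T (scaleC a x) = scaleC a (T x))"

definition bops :: "('a::complex_banach \<Rightarrow> 'a) set" where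
  "bops = {T. clinear_op T \<and> (\<exists>K. \<forall>x. norm (T x) \<le> K * norm x)}"

definition invertible_op :: "('a::complex_banach \<Rightarrow> 'a) \<Rightarrow> bool" where
  "invertible_op S \<longleftrightarrow> S \<in> bops \<and> bij S \<and> inv S \<in> bops"

definition csubspace :: "'a::complex_banach set \<Rightarrow> bool" where
  "csubspace M \<longleftrightarrow> 0 \<in> M \<and> (\<forall>x\<in>M. \<forall>y\<in>M. x + y \<in> M) \<and> (\<forall>a. \<forall>x\<in>M. scaleC a x \<in> M)"

definition cspan :: "'a::complex_banach set \<Rightarrow> 'a set" where
  "cspan A = \<Inter>{M. csubspace M \<and> A \<subseteq> M}"

definition closed_subspaces :: "'a::complex_banach set set" where
  "closed_subspaces = {M. csubspace M \<and> closed M}"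

definition is_nest :: "'a::complex_banach set set \<Rightarrow> bool" where
  "is_nest F \<longleftrightarrow> F \<subseteq> closed_subspaces \<and> {0} \<in> F \<and> UNIV \<in> F
     \<and> (\<forall>A\<in>F. \<forall>B\<in>F. A \<subseteq> B \<or> B \<subseteq> A)
     \<and> (\<forall>G. G \<subseteq> F \<longrightarrow> \<Inter>G \<in> F)
     \<and> (\<forall>G. G \<subseteq> F \<longrightarrow> closure (cspan (\<Union>G)) \<in> F)"

definition well_ordered_nest :: "'a::complex_banach set set \<Rightarrow> bool" where
  "well_ordered_nest F \<longleftrightarrow> is_nest F \<and> (\<forall>G. G \<subseteq> F \<and> G \<noteq> {} \<longrightarrow> (\<exists>m\<in>G. \<forall>A\<in>G. m \<subseteq> A))"

definition subspace_lattice :: "'a::complex_banach set set \<Rightarrow> bool" where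
  "subspace_lattice F \<longleftrightarrow> F \<subseteq> closed_subspaces \<and> {0} \<in> F \<and> UNIV \<in> F
     \<and> (\<forall>A\<in>F. \<forall>B\<in>F. A \<inter> B \<in> F \<and> closure {a + b | a b. a \<in> A \<and> b \<in> B} \<in> F)"

definition chain_union_lattice :: "'a::complex_banach set set \<Rightarrow> bool" where
  "chain_union_lattice F \<longleftrightarrow> subspace_lattice F \<and>
    (\<exists>(n::nat) (q::nat \<Rightarrow> nat) (Ms::nat \<Rightarrow> nat \<Rightarrow> 'a set).
       n \<ge> 2
     \<and> (\<forall>i\<in>{1..n}. q i \<ge> 1)
     \<and> (\<forall>i\<in>{1..n}. {0} \<subset> Ms i 1 \<and> Ms i (q i) \<subset> UNIV
                      \<and> (\<forall>k. 1 \<le> k \<and> k < q i \<longrightarrow> Ms i k \<subset> Ms i (Suc k)))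
     \<and> (\<forall>i\<in>{1..n}. \<forall>j\<in>{1..n}. i \<noteq> j \<longrightarrow>
          (\<forall>k\<in>{1..q i}. \<forall>l\<in>{1..q j}. \<not> Ms i k \<subseteq> Ms j l \<and> \<not> Ms j l \<subseteq> Ms i k))
     \<and> (\<forall>i\<in>{1..n}. \<forall>j\<in>{1..n}. i \<noteq> j \<longrightarrow> q i \<noteq> q j)
     \<and> F = (\<Union>i\<in>{1..n}. {{0}, UNIV} \<union> {Ms i k | k. k \<in> {1..q i}}))"

definition Alg :: "'a::complex_banach set set \<Rightarrow> ('a \<Rightarrow> 'a) set" where
  "Alg F = {T \<in> bops. \<forall>M\<in>F. T ` M \<subseteq> M}"

definition Grp :: "('a::complex_banach \<Rightarrow> 'a) set \<Rightarrow> ('a \<Rightarrow> 'a) set" where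
  "Grp A = {S \<in> A. invertible_op S \<and> inv S \<in> A}"

definition Col :: "'a::complex_banach set set \<Rightarrow> ('a \<Rightarrow> 'a) set" where
  "Col F = {S. invertible_op S \<and> (\<forall>M\<in>closed_subspaces. M \<in> F \<longleftrightarrow> S ` M \<in> F)}"

end

theory Submission
  imports Defs
begin

text \<open>An operator S in Col(M) is bounded and invertible, and the preimage under S of a member
  of M is again a closed subspace; hence N \<mapsto> S N permutes M and is an order automorphism of
  (M, \<subseteq>). If (M, \<subseteq>) has no order automorphism besides the identity, S therefore fixes
  every member of M, and so does S\<inverse>, i.e. S \<in> Grp(Alg M); the reverse inclusion holds for every M.
  A well-ordered family is rigid: the least member m moved by an automorphism f would satisfy
  both m \<subseteq> f m and f m \<subseteq> m. In the chain case, M^(i)_k has exactly k members of M strictly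
  below it and q i - k + 1 strictly above it; an automorphism preserves both numbers, so it
  preserves k and q i, and since the chain lengths are distinct it fixes M^(i)_k.\<close>

definition order_automorphism :: "'b set set \<Rightarrow> ('b set \<Rightarrow> 'b set) \<Rightarrow> bool" where
  "order_automorphism F f \<longleftrightarrow> f ` F = F \<and> (\<forall>A\<in>F. \<forall>B\<in>F. f A \<subseteq> f B \<longleftrightarrow> A \<subseteq> B)"

lemma order_automorphism_permutes: "order_automorphism F f \<Longrightarrow> f ` F = F"
  unfolding order_automorphism_def by (rule conjunct1)

lemma order_automorphism_subset_iff:
  "order_automorphism F f \<Longrightarrow> A \<in> F \<Longrightarrow> B \<in> F \<Longrightarrow> f A \<subseteq> f B \<longleftrightarrow> A \<subseteq> B"
  unfolding order_automorphism_def by blast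

lemma order_automorphism_image:
  assumes "inj S" and "image S ` F = F"
  shows "order_automorphism F (image S)"
  using assms by (simp add: order_automorphism_def inj_image_subset_iff)

lemma order_automorphism_inj_on:
  assumes "order_automorphism F f"
  shows "inj_on f F"
  using assms unfolding order_automorphism_def by (intro inj_onI) (metis subset_antisym order_refl)

lemma order_automorphism_psubset_iff:
  assumes "order_automorphism F f" and "A \<in> F" and "B \<in> F"
  shows "f A \<subset> f B \<longleftrightarrow> A \<subset> B"
  using assms unfolding order_automorphism_def by (auto simp: less_le_not_le)

lemma order_automorphism_fixes_well_ordered:
  assumes least: "\<And>G. G \<subseteq> F \<Longrightarrow> G \<noteq> {} \<Longrightarrow> \<exists>m\<in>G. \<forall>A\<in>G. m \<subseteq> A"
    and f: "order_automorphism F f" and X: "X \<in> F"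
  shows "f X = X"
proof (rule ccontr)
  assume "f X \<noteq> X"
  then have "{A\<in>F. f A \<noteq> A} \<noteq> {}" using X by blast
  then obtain m where m: "m \<in> F" "f m \<noteq> m"
    and minimal: "\<And>A. A \<in> F \<Longrightarrow> f A \<noteq> A \<Longrightarrow> m \<subseteq> A"
    using least[of "{A\<in>F. f A \<noteq> A}"] by auto
  note perm = order_automorphism_permutes[OF f] and mono = order_automorphism_subset_iff[OF f]
  have fm: "f m \<in> F" using m(1) perm by (metis imageI)
  have "f (f m) \<noteq> f m"
    using inj_onD[OF order_automorphism_inj_on[OF f] _ fm m(1)] m(2) by blast
  then have up: "m \<subseteq> f m" using minimal[OF fm] by blast
  obtain p where p: "p \<in> F" "m = f p" using m(1) perm by (metis imageE)
  then have "f p \<noteq> p" using m(2) by metis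
  then have "m \<subseteq> p" using minimal[OF p(1)] by blast
  then have "f m \<subseteq> m" using mono[OF m(1) p(1)] p(2) by simp
  with up have "f m = m" by (rule subset_antisym[rotated])
  with m(2) show False by simp
qed

lemma image_Collect_permutation:
  assumes perm: "f ` F = F" and PQ: "\<And>Y. Y \<in> F \<Longrightarrow> P (f Y) \<longleftrightarrow> Q Y"
  shows "f ` {Y\<in>F. Q Y} = {Y\<in>F. P Y}"
proof (intro equalityI subsetI)
  fix Z assume "Z \<in> f ` {Y\<in>F. Q Y}"
  then obtain Y where "Y \<in> F" "Q Y" "Z = f Y" by blast
  then show "Z \<in> {Y\<in>F. P Y}" using perm PQ by blast
next
  fix Z assume Z: "Z \<in> {Y\<in>F. P Y}"
  then obtain Y where "Y \<in> F" "Z = f Y" using perm by blast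
  then show "Z \<in> f ` {Y\<in>F. Q Y}" using PQ Z by blast
qed

lemma card_Collect_order_automorphism:
  assumes f: "order_automorphism F f" and PQ: "\<And>Y. Y \<in> F \<Longrightarrow> P (f Y) \<longleftrightarrow> Q Y"
  shows "card {Y\<in>F. P Y} = card {Y\<in>F. Q Y}"
proof -
  have "{Y\<in>F. P Y} = f ` {Y\<in>F. Q Y}"
    using order_automorphism_permutes[OF f] PQ by (rule image_Collect_permutation[symmetric])
  moreover have "inj_on f {Y\<in>F. Q Y}"
    using order_automorphism_inj_on[OF f] by (rule inj_on_subset) blast
  ultimately show ?thesis by (simp add: card_image)
qed

lemma card_psubsets_order_automorphism:
  assumes f: "order_automorphism F f" and X: "X \<in> F"
  shows "card {Y\<in>F. Y \<subset> f X} = card {Y\<in>F. Y \<subset> X}"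
  by (rule card_Collect_order_automorphism[OF f]) (rule order_automorphism_psubset_iff[OF f _ X])

lemma card_psupsets_order_automorphism:
  assumes f: "order_automorphism F f" and X: "X \<in> F"
  shows "card {Y\<in>F. f X \<subset> Y} = card {Y\<in>F. X \<subset> Y}"
  by (rule card_Collect_order_automorphism[OF f]) (rule order_automorphism_psubset_iff[OF f X])

lemma order_automorphism_fixes_least:
  assumes f: "order_automorphism F f" and B: "B \<in> F" "\<And>Y. Y \<in> F \<Longrightarrow> B \<subseteq> Y"
  shows "f B = B"
proof -
  note perm = order_automorphism_permutes[OF f] and mono = order_automorphism_subset_iff[OF f]
  have "f B \<in> F" using B(1) perm by (metis imageI)
  then have "B \<subseteq> f B" by (rule B(2))
  obtain Z where "Z \<in> F" "B = f Z" using B(1) perm by (metis imageE)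
  then have "f B \<subseteq> B" using mono[OF B(1) \<open>Z \<in> F\<close>] B(2) by simp
  then show ?thesis using \<open>B \<subseteq> f B\<close> by (rule subset_antisym)
qed

lemma order_automorphism_fixes_greatest:
  assumes f: "order_automorphism F f" and B: "B \<in> F" "\<And>Y. Y \<in> F \<Longrightarrow> Y \<subseteq> B"
  shows "f B = B"
proof -
  note perm = order_automorphism_permutes[OF f] and mono = order_automorphism_subset_iff[OF f]
  have "f B \<in> F" using B(1) perm by (metis imageI)
  then have "f B \<subseteq> B" by (rule B(2))
  obtain Z where "Z \<in> F" "B = f Z" using B(1) perm by (metis imageE)
  then have "B \<subseteq> f B" using mono[OF \<open>Z \<in> F\<close> B(1)] B(2) by simp
  with \<open>f B \<subseteq> B\<close> show ?thesis by (rule subset_antisym)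
qed

definition chain_union_family :: "nat \<Rightarrow> (nat \<Rightarrow> nat) \<Rightarrow> (nat \<Rightarrow> nat \<Rightarrow> 'a::zero set) \<Rightarrow> 'a set set" where
  "chain_union_family n q Ms = (\<Union>i\<in>{1..n}. {{0}, UNIV} \<union> {Ms i k | k. k \<in> {1..q i}})"

text \<open>The data of chain_union_lattice without the unused bounds n \<ge> 2 and q i \<ge> 1;
  incomparability is stated in one direction only, the other being the case with i, j swapped.\<close>
locale chain_union =
  fixes n :: nat and q :: "nat \<Rightarrow> nat" and Ms :: "nat \<Rightarrow> nat \<Rightarrow> 'a::zero set"
  assumes bottom_psubset: "i \<in> {1..n} \<Longrightarrow> {0} \<subset> Ms i 1"
    and top_psubset: "i \<in> {1..n} \<Longrightarrow> Ms i (q i) \<subset> UNIV"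
    and chain_step: "i \<in> {1..n} \<Longrightarrow> 1 \<le> k \<Longrightarrow> k < q i \<Longrightarrow> Ms i k \<subset> Ms i (Suc k)"
    and incomparable: "i \<in> {1..n} \<Longrightarrow> j \<in> {1..n} \<Longrightarrow> i \<noteq> j \<Longrightarrow>
      k \<in> {1..q i} \<Longrightarrow> l \<in> {1..q j} \<Longrightarrow> \<not> Ms i k \<subseteq> Ms j l"
    and lengths_distinct: "i \<in> {1..n} \<Longrightarrow> j \<in> {1..n} \<Longrightarrow> i \<noteq> j \<Longrightarrow> q i \<noteq> q j"
begin

abbreviation family :: "'a set set" where
  "family \<equiv> chain_union_family n q Ms"

lemma chain_strict_mono:
  assumes i: "i \<in> {1..n}" and "1 \<le> k" "k < l" "l \<le> q i"
  shows "Ms i k \<subset> Ms i l"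
proof -
  have "Suc k \<le> l" using \<open>k < l\<close> by simp
  then show ?thesis
  proof (induction l rule: dec_induct)
    case base
    then show ?case using chain_step[OF i] assms by simp
  next
    case (step m)
    then show ?case using chain_step[OF i, of m] assms by force
  qed
qed

lemma chain_mono:
  "i \<in> {1..n} \<Longrightarrow> 1 \<le> k \<Longrightarrow> k \<le> l \<Longrightarrow> l \<le> q i \<Longrightarrow> Ms i k \<subseteq> Ms i l"
  using chain_strict_mono[of i k l] by (cases "k = l") auto

lemma chain_inj_on:
  assumes i: "i \<in> {1..n}"
  shows "inj_on (Ms i) {1..q i}"
proof (rule inj_onI)
  fix k l assume k: "k \<in> {1..q i}" and l: "l \<in> {1..q i}" and eq: "Ms i k = Ms i l"
  show "k = l"
  proof (rule linorder_cases)
    assume "k < l" then show ?thesis using chain_strict_mono[OF i, of k l] k l eq by simp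
  next
    assume "l < k" then show ?thesis using chain_strict_mono[OF i, of l k] k l eq by simp
  qed
qed

lemma bottom_psubset_chain:
  assumes i: "i \<in> {1..n}" and k: "k \<in> {1..q i}"
  shows "{0} \<subset> Ms i k"
proof -
  have "Ms i 1 \<subseteq> Ms i k" using chain_mono[OF i, of 1 k] k by simp
  then show ?thesis using bottom_psubset[OF i] by blast
qed

lemma chain_psubset_top:
  assumes i: "i \<in> {1..n}" and k: "k \<in> {1..q i}"
  shows "Ms i k \<subset> UNIV"
proof -
  have "Ms i k \<subseteq> Ms i (q i)" using chain_mono[OF i, of k "q i"] k by simp
  then show ?thesis using top_psubset[OF i] by blast
qed

lemma family_cases:
  assumes "Y \<in> family"
  obtains "Y = {0}" | "Y = UNIV" | j l where "j \<in> {1..n}" "l \<in> {1..q j}" "Y = Ms j l"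
  using assms unfolding chain_union_family_def by blast

lemma chain_in_family: "i \<in> {1..n} \<Longrightarrow> k \<in> {1..q i} \<Longrightarrow> Ms i k \<in> family"
  unfolding chain_union_family_def by blast

lemma bottom_in_family: "i \<in> {1..n} \<Longrightarrow> {0} \<in> family"
  and top_in_family: "i \<in> {1..n} \<Longrightarrow> UNIV \<in> family"
  unfolding chain_union_family_def by blast+

lemma psubsets_in_family:
  assumes i: "i \<in> {1..n}" and k: "k \<in> {1..q i}"
  shows "{Y\<in>family. Y \<subset> Ms i k} = insert {0} (Ms i ` {1..<k})"
proof (intro equalityI subsetI)
  fix Y assume "Y \<in> {Y\<in>family. Y \<subset> Ms i k}"
  then have Y: "Y \<in> family" "Y \<subset> Ms i k" by auto
  from Y(1) show "Y \<in> insert {0} (Ms i ` {1..<k})"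
  proof (cases rule: family_cases)
    case 2 then show ?thesis using Y(2) by blast
  next
    case (3 j l)
    then have "j = i" using incomparable[OF 3(1) i _ 3(2) k] Y(2) by blast
    then have "\<not> k \<le> l" using chain_mono[OF i, of k l] 3 Y(2) k by auto
    then show ?thesis using 3 \<open>j = i\<close> by auto
  qed simp
next
  fix Y assume "Y \<in> insert {0} (Ms i ` {1..<k})"
  then consider "Y = {0}" | l where "l \<in> {1..<k}" "Y = Ms i l" by blast
  then show "Y \<in> {Y\<in>family. Y \<subset> Ms i k}"
  proof cases
    case 1
    then show ?thesis using bottom_psubset_chain[OF i k] bottom_in_family[OF i] by simp
  next
    case (2 l)
    then show ?thesis using chain_in_family[OF i, of l] chain_strict_mono[OF i, of l k] k by simp
  qed
qed

lemma psupsets_in_family: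
  assumes i: "i \<in> {1..n}" and k: "k \<in> {1..q i}"
  shows "{Y\<in>family. Ms i k \<subset> Y} = insert UNIV (Ms i ` {k<..q i})"
proof (intro equalityI subsetI)
  fix Y assume "Y \<in> {Y\<in>family. Ms i k \<subset> Y}"
  then have Y: "Y \<in> family" "Ms i k \<subset> Y" by auto
  from Y(1) show "Y \<in> insert UNIV (Ms i ` {k<..q i})"
  proof (cases rule: family_cases)
    case 1 then show ?thesis using Y(2) bottom_psubset_chain[OF i k] by blast
  next
    case (3 j l)
    then have "j = i" using incomparable[OF i 3(1) _ k 3(2)] Y(2) by blast
    then have "\<not> l \<le> k" using chain_mono[OF i, of l k] 3 Y(2) k by auto
    then show ?thesis using 3 \<open>j = i\<close> by auto
  qed simp
next
  fix Y assume "Y \<in> insert UNIV (Ms i ` {k<..q i})"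
  then consider "Y = UNIV" | l where "l \<in> {k<..q i}" "Y = Ms i l" by blast
  then show "Y \<in> {Y\<in>family. Ms i k \<subset> Y}"
  proof cases
    case 1
    then show ?thesis using chain_psubset_top[OF i k] top_in_family[OF i] by simp
  next
    case (2 l)
    then show ?thesis using chain_in_family[OF i, of l] chain_strict_mono[OF i, of k l] k by simp
  qed
qed

lemma card_psubsets_in_family:
  assumes i: "i \<in> {1..n}" and k: "k \<in> {1..q i}"
  shows "card {Y\<in>family. Y \<subset> Ms i k} = k"
proof -
  have "inj_on (Ms i) {1..<k}"
    using chain_inj_on[OF i] by (rule inj_on_subset) (use k in auto)
  then have "card (Ms i ` {1..<k}) = k - 1" by (simp add: card_image)
  moreover have "{0} \<notin> Ms i ` {1..<k}"
  proof
    assume "{0} \<in> Ms i ` {1..<k}"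
    then obtain l where "l \<in> {1..<k}" "{0} = Ms i l" by blast
    then show False using bottom_psubset_chain[OF i, of l] k by simp
  qed
  ultimately have "card (insert {0} (Ms i ` {1..<k})) = Suc (k - 1)"
    by (simp add: card_insert_disjoint)
  also have "Suc (k - 1) = k" using k by simp
  finally show ?thesis by (simp only: psubsets_in_family[OF i k])
qed

lemma card_psupsets_in_family:
  assumes i: "i \<in> {1..n}" and k: "k \<in> {1..q i}"
  shows "card {Y\<in>family. Ms i k \<subset> Y} = q i - k + 1"
proof -
  have "inj_on (Ms i) {k<..q i}"
    using chain_inj_on[OF i] by (rule inj_on_subset) (use k in auto)
  then have "card (Ms i ` {k<..q i}) = q i - k" by (simp add: card_image)
  moreover have "UNIV \<notin> Ms i ` {k<..q i}"
  proof
    assume "UNIV \<in> Ms i ` {k<..q i}"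
    then obtain l where "l \<in> {k<..q i}" "UNIV = Ms i l" by blast
    then show False using chain_psubset_top[OF i, of l] k by simp
  qed
  ultimately have "card (insert UNIV (Ms i ` {k<..q i})) = Suc (q i - k)"
    by (simp add: card_insert_disjoint)
  also have "Suc (q i - k) = q i - k + 1" by simp
  finally show ?thesis by (simp only: psupsets_in_family[OF i k])
qed

lemma bottom_subset_family: "Y \<in> family \<Longrightarrow> {0} \<subseteq> Y"
  by (cases rule: family_cases) (use bottom_psubset_chain in auto)

lemma order_automorphism_fixes_family:
  assumes f: "order_automorphism family f" and X: "X \<in> family"
  shows "f X = X"
proof -
  from X obtain i0 where i0: "i0 \<in> {1..n}" unfolding chain_union_family_def by blast
  have f0: "f {0} = {0}"
    using order_automorphism_fixes_least[OF f bottom_in_family[OF i0] bottom_subset_family] .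
  have fU: "f UNIV = UNIV"
    using order_automorphism_fixes_greatest[OF f top_in_family[OF i0]] by blast
  have inj: "inj_on f family" using f by (rule order_automorphism_inj_on)
  from X show ?thesis
  proof (cases rule: family_cases)
    case (3 i k)
    have "f X \<in> family"
      using X order_automorphism_permutes[OF f] by (metis imageI)
    moreover have "f X \<noteq> {0}"
    proof
      assume "f X = {0}"
      then have "X = {0}" using inj_onD[OF inj _ X bottom_in_family[OF i0]] f0 by simp
      then show False using bottom_psubset_chain[OF 3(1,2)] 3(3) by simp
    qed
    moreover have "f X \<noteq> UNIV"
    proof
      assume "f X = UNIV"
      then have "X = UNIV" using inj_onD[OF inj _ X top_in_family[OF i0]] fU by simp
      then show False using chain_psubset_top[OF 3(1,2)] 3(3) by simp
    qed
    ultimately obtain j l where j: "j \<in> {1..n}" "l \<in> {1..q j}" "f X = Ms j l"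
      by (cases rule: family_cases) auto
    have "l = card {Y\<in>family. Y \<subset> f X}" using card_psubsets_in_family[OF j(1,2)] j(3) by simp
    also have "\<dots> = card {Y\<in>family. Y \<subset> X}" by (rule card_psubsets_order_automorphism[OF f X])
    also have "\<dots> = k" using card_psubsets_in_family[OF 3(1,2)] 3(3) by simp
    finally have "l = k" .
    have "q j - l + 1 = card {Y\<in>family. f X \<subset> Y}"
      using card_psupsets_in_family[OF j(1,2)] j(3) by simp
    also have "\<dots> = card {Y\<in>family. X \<subset> Y}" by (rule card_psupsets_order_automorphism[OF f X])
    also have "\<dots> = q i - k + 1" using card_psupsets_in_family[OF 3(1,2)] 3(3) by simp
    finally have "q j - l + 1 = q i - k + 1" .
    then have "q j = q i" using \<open>l = k\<close> j(2) 3(2) by arith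
    then have "j = i" using lengths_distinct[OF j(1) 3(1)] by blast
    then show ?thesis using j(3) 3(3) \<open>l = k\<close> by simp
  qed (use f0 fU in simp_all)
qed

end

lemma chain_union_lattice_imp_chain_union:
  fixes F :: "'a::complex_banach set set"
  assumes "chain_union_lattice F"
  obtains n q Ms where "chain_union n q Ms" and "F = chain_union_family n q Ms"
proof -
  obtain n q and Ms :: "nat \<Rightarrow> nat \<Rightarrow> 'a set" where
    chains: "\<forall>i\<in>{1..n}. {0} \<subset> Ms i 1 \<and> Ms i (q i) \<subset> UNIV
      \<and> (\<forall>k. 1 \<le> k \<and> k < q i \<longrightarrow> Ms i k \<subset> Ms i (Suc k))"
    and incomparable: "\<forall>i\<in>{1..n}. \<forall>j\<in>{1..n}. i \<noteq> j \<longrightarrow>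
      (\<forall>k\<in>{1..q i}. \<forall>l\<in>{1..q j}. \<not> Ms i k \<subseteq> Ms j l \<and> \<not> Ms j l \<subseteq> Ms i k)"
    and distinct: "\<forall>i\<in>{1..n}. \<forall>j\<in>{1..n}. i \<noteq> j \<longrightarrow> q i \<noteq> q j"
    and F: "F = (\<Union>i\<in>{1..n}. {{0}, UNIV} \<union> {Ms i k | k. k \<in> {1..q i}})"
    using assms unfolding chain_union_lattice_def by (elim conjE exE) (rule that; assumption)
  have "chain_union n q Ms"
    by unfold_locales (meson chains incomparable distinct)+
  moreover have "F = chain_union_family n q Ms" using F by (simp only: chain_union_family_def)
  ultimately show ?thesis by (rule that)
qed

lemma clinear_op_zero: "clinear_op T \<Longrightarrow> T 0 = 0"
  unfolding clinear_op_def by (metis add_cancel_right_right add_0)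

lemma bops_bounded_linear:
  assumes "T \<in> bops"
  shows "bounded_linear T"
proof -
  obtain K where lin: "clinear_op T" and K: "\<And>x. norm (T x) \<le> K * norm x"
    using assms unfolding bops_def by blast
  show ?thesis
  proof (rule bounded_linear_intro[where K = K])
    show "T (x + y) = T x + T y" for x y using lin unfolding clinear_op_def by blast
    show "T (scaleR r x) = scaleR r (T x)" for r x
      using lin unfolding clinear_op_def by (metis scaleC_of_real)
    show "norm (T x) \<le> norm x * K" for x using K[of x] by (simp add: mult.commute)
  qed
qed

lemma csubspace_vimage:
  assumes "clinear_op T" and "csubspace N"
  shows "csubspace (T -` N)"
  using assms clinear_op_zero[OF assms(1)] unfolding csubspace_def clinear_op_def by simp

lemma closed_subspaces_vimage:
  assumes "T \<in> bops" and "N \<in> closed_subspaces"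
  shows "T -` N \<in> closed_subspaces"
proof -
  have "closed (T -` N)"
    using assms continuous_closed_vimage linear_continuous_at[OF bops_bounded_linear]
    unfolding closed_subspaces_def by blast
  moreover have "csubspace (T -` N)"
    using assms csubspace_vimage unfolding bops_def closed_subspaces_def by blast
  ultimately show ?thesis unfolding closed_subspaces_def by blast
qed

lemma Col_permutes:
  assumes S: "S \<in> Col F" and F: "F \<subseteq> closed_subspaces"
  shows "image S ` F = F"
proof -
  have inv: "invertible_op S" and col: "\<And>N. N \<in> closed_subspaces \<Longrightarrow> N \<in> F \<longleftrightarrow> S ` N \<in> F"
    using S unfolding Col_def by auto
  have "X \<in> image S ` F" if "X \<in> F" for X
  proof -
    have "S -` X \<in> closed_subspaces"
      using closed_subspaces_vimage inv F that unfolding invertible_op_def by blast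
    moreover have "S ` (S -` X) = X"
      using inv surj_image_vimage_eq unfolding invertible_op_def bij_def by blast
    ultimately show ?thesis using col that by (metis imageI)
  qed
  then show ?thesis using col F by blast
qed

lemma Col_subset_Grp_Alg:
  assumes F: "F \<subseteq> closed_subspaces"
    and rigid: "\<And>f. order_automorphism F f \<Longrightarrow> \<forall>X\<in>F. f X = X"
  shows "Col F \<subseteq> Grp (Alg F)"
proof
  fix S assume S: "S \<in> Col F"
  then have inv: "invertible_op S" unfolding Col_def by blast
  then have "inj S" unfolding invertible_op_def bij_def by blast
  then have fixed: "S ` X = X" if "X \<in> F" for X
    using rigid order_automorphism_image Col_permutes[OF S F] that by blast
  then have "inv S ` X = X" if "X \<in> F" for X
    using image_inv_f_f[OF \<open>inj S\<close>] that by metis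
  with fixed inv show "S \<in> Grp (Alg F)"
    unfolding Grp_def Alg_def invertible_op_def by auto
qed

lemma Grp_Alg_subset_Col: "Grp (Alg F) \<subseteq> Col F"
proof
  fix S assume "S \<in> Grp (Alg F)"
  then have inv: "invertible_op S" and into: "\<And>N. N \<in> F \<Longrightarrow> S ` N \<subseteq> N"
    and inv_into: "\<And>N. N \<in> F \<Longrightarrow> inv S ` N \<subseteq> N"
    unfolding Grp_def Alg_def by auto
  have inj: "inj S" and surj: "surj S" using inv unfolding invertible_op_def bij_def by auto
  have fixed: "S ` N = N" if "N \<in> F" for N
  proof
    show "S ` N \<subseteq> N" using into that .
    show "N \<subseteq> S ` N"
      using inv_into[OF that] surj_f_inv_f[OF surj]
      by (metis image_subset_iff rev_image_eqI subsetI)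
  qed
  have "N \<in> F \<longleftrightarrow> S ` N \<in> F" for N
    using fixed inj_image_eq_iff[OF inj] by metis
  with inv show "S \<in> Col F" unfolding Col_def by blast
qed

lemma well_ordered_nest_least:
  "well_ordered_nest F \<Longrightarrow> G \<subseteq> F \<Longrightarrow> G \<noteq> {} \<Longrightarrow> \<exists>m\<in>G. \<forall>A\<in>G. m \<subseteq> A"
  unfolding well_ordered_nest_def by blast

lemma well_ordered_nest_closed_subspaces: "well_ordered_nest F \<Longrightarrow> F \<subseteq> closed_subspaces"
  by (simp add: well_ordered_nest_def is_nest_def)

lemma chain_union_lattice_closed_subspaces: "chain_union_lattice F \<Longrightarrow> F \<subseteq> closed_subspaces"
  by (simp add: chain_union_lattice_def subspace_lattice_def)

theorem theorem3p14:
  fixes M :: "'a::complex_banach set set"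
  assumes "well_ordered_nest M \<or> chain_union_lattice M"
  shows "Col M = Grp (Alg M)"
proof -
  have closed: "M \<subseteq> closed_subspaces"
    using assms well_ordered_nest_closed_subspaces chain_union_lattice_closed_subspaces by blast
  have rigid: "\<forall>X\<in>M. f X = X" if f: "order_automorphism M f" for f
    using assms
  proof
    assume "well_ordered_nest M"
    note least = well_ordered_nest_least[OF this]
    show ?thesis using order_automorphism_fixes_well_ordered[OF least f] by blast
  next
    assume "chain_union_lattice M"
    then obtain n q Ms where chains: "chain_union n q Ms" and M: "M = chain_union_family n q Ms"
      by (rule chain_union_lattice_imp_chain_union)
    show ?thesis using chain_union.order_automorphism_fixes_family[OF chains, folded M] f by blast
  qed
  show ?thesis
    using Col_subset_Grp_Alg[OF closed rigid] Grp_Alg_subset_Col by (rule subset_antisym)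
qed

end
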